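(* Let $(X,T)$ be a topological dynamical system and $\mu$ a $T$-invariant Borel probability measure on $X$. The following are equivalent: (1) $\mu$ has bounded complexity with respect to $\{\hat d_n\}$; (2) $T$ is $\mu$-equicontinuous in the mean; (3) $T$ is $\mu$-mean equicontinuous.
   Context: A t.d.s. $(X,T)$ consists of a compact metric space $(X,d)$ and a continuous map $T\colon X\to X$. Let $\bar d_n(x,y)=\frac1n\sum_{i=0}^{n-1}d(T^ix,T^iy)$, $\hat d_n(x,y)=\max\{\bar d_k(x,y)\colon1\le k\le n\}$, $B_{\hat d_n}(x,\varepsilon)=\{y\colon\hat d_n(x,y)<\varepsilon\}$, and $\widehat{\mathrm{span}}_\mu(n,\varepsilon)=\min\{\#(F)\colon F\subset X,\ \mu(\bigcup_{x\in F}B_{\hat d_n}(x,\varepsilon))>1-\varepsilon\}$. $\mu$ has bounded complexity with respect to $\{\hat d_n\}$ if for every $\varepsilon>0$ there is a positive integer $C$ with $\widehat{\mathrm{span}}_\mu(n,\varepsilon)\le C$ for all $n\ge1$. A set $K\subset X$ is equicontinuous in the mean if for every $\varepsilon>0$ there is $\delta>0$ with $\hat d_n(x,y)<\varepsilon$ for all $n\ge1$ and all $x,y\in K$ with $d(x,y)<\delta$; $K$ is mean equicontinuous if for every $\varepsilon>0$ there is $\delta>0$ with $\limsup_{n\to\infty}\bar d_n(x,y)<\varepsilon$ for all $x,y\in K$ with $d(x,y)<\delta$. $T$ is $\mu$-equicontinuous in the mean (resp. $\mu$-mean equicontinuous) if for every $\tau>0$ there is a measurable $K\subset X$ with $\mu(K)>1-\tau$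 which is equicontinuous in the mean (resp. mean equicontinuous). *)

theory Defs
  imports "HOL-Analysis.Analysis" "HOL-Probability.Probability"
begin

definition tds :: "'a::metric_space set \<Rightarrow> ('a \<Rightarrow> 'a) \<Rightarrow> bool" where
  "tds X T \<longleftrightarrow> compact X \<and> continuous_on X T \<and> T ` X \<subseteq> X"

definition invariant_measure :: "'a measure \<Rightarrow> ('a \<Rightarrow> 'a) \<Rightarrow> bool" where
  "invariant_measure \<mu> T \<longleftrightarrow> T \<in> measurable \<mu> \<mu> \<and>
     (\<forall>A\<in>sets \<mu>. measure \<mu> (T -` A \<inter> space \<mu>) = measure \<mu> A)"

definition dbar :: "('a::metric_space \<Rightarrow> 'a) \<Rightarrow> nat \<Rightarrow> 'a \<Rightarrow> 'a \<Rightarrow> real" where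
  "dbar T n x y = (1 / real n) * (\<Sum>i<n. dist ((T ^^ i) x) ((T ^^ i) y))"

definition dhat :: "('a::metric_space \<Rightarrow> 'a) \<Rightarrow> nat \<Rightarrow> 'a \<Rightarrow> 'a \<Rightarrow> real" where
  "dhat T n x y = Max ((\<lambda>k. dbar T k x y) ` {1..n})"

definition ball_hat :: "'a::metric_space set \<Rightarrow> ('a \<Rightarrow> 'a) \<Rightarrow> nat \<Rightarrow> 'a \<Rightarrow> real \<Rightarrow> 'a set" where
  "ball_hat X T n x \<epsilon> = {y \<in> X. dhat T n x y < \<epsilon>}"

definition span_hat :: "'a::metric_space measure \<Rightarrow> 'a set \<Rightarrow> ('a \<Rightarrow> 'a) \<Rightarrow> nat \<Rightarrow> real \<Rightarrow> nat" where
  "span_hat \<mu> X T n \<epsilon> = (LEAST k. \<exists>F. finite F \<and> F \<subseteq> X \<and> card F = k \<and>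
       measure \<mu> (\<Union>x\<in>F. ball_hat X T n x \<epsilon>) > 1 - \<epsilon>)"

definition bounded_complexity :: "'a::metric_space measure \<Rightarrow> 'a set \<Rightarrow> ('a \<Rightarrow> 'a) \<Rightarrow> bool" where
  "bounded_complexity \<mu> X T \<longleftrightarrow>
     (\<forall>\<epsilon>>0. \<exists>C::nat. C > 0 \<and> (\<forall>n\<ge>1. span_hat \<mu> X T n \<epsilon> \<le> C))"

definition equicont_in_mean :: "('a::metric_space \<Rightarrow> 'a) \<Rightarrow> 'a set \<Rightarrow> bool" where
  "equicont_in_mean T K \<longleftrightarrow>
     (\<forall>\<epsilon>>0. \<exists>\<delta>>0. \<forall>n\<ge>1. \<forall>x\<in>K. \<forall>y\<in>K. dist x y < \<delta> \<longrightarrow> dhat T n x y < \<epsilon>)"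

definition mean_equicont :: "('a::metric_space \<Rightarrow> 'a) \<Rightarrow> 'a set \<Rightarrow> bool" where
  "mean_equicont T K \<longleftrightarrow>
     (\<forall>\<epsilon>>0. \<exists>\<delta>>0. \<forall>x\<in>K. \<forall>y\<in>K. dist x y < \<delta> \<longrightarrow>
        limsup (\<lambda>n. ereal (dbar T n x y)) < ereal \<epsilon>)"

definition mu_equicont_in_mean :: "'a::metric_space measure \<Rightarrow> ('a \<Rightarrow> 'a) \<Rightarrow> bool" where
  "mu_equicont_in_mean \<mu> T \<longleftrightarrow>
     (\<forall>\<tau>>0. \<exists>K\<in>sets \<mu>. measure \<mu> K > 1 - \<tau> \<and> equicont_in_mean T K)"

definition mu_mean_equicont :: "'a::metric_space measure \<Rightarrow> ('a \<Rightarrow> 'a) \<Rightarrow> bool" where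
  "mu_mean_equicont \<mu> T \<longleftrightarrow>
     (\<forall>\<tau>>0. \<exists>K\<in>sets \<mu>. measure \<mu> K > 1 - \<tau> \<and> mean_equicont T K)"

end

theory Submission
  imports Defs
begin

text \<open>
  (2) implies (3) because \<open>dbar T n \<le> dhat T n\<close>, and (2) implies (1) because the
  \<open>dhat T n\<close>-balls around a finite \<open>\<delta>\<close>-net of an equicontinuous set \<open>K\<close> cover \<open>K\<close>
  for every \<open>n\<close>. For the converses it suffices, for all \<open>\<epsilon>, \<eta> > 0\<close>, to find a set of
  measure \<open>\<ge> 1 - \<eta>\<close> on which nearby points are \<open>\<epsilon>\<close>-close for every \<open>dhat T n\<close>.

  (3) implies (2): take a finite net \<open>P\<close> of a mean equicontinuous set \<open>K\<close>. The points \<open>y\<close>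
  with \<open>dbar T k x y < \<epsilon>\<close> for all net points \<open>x\<close> near \<open>y\<close> and all \<open>k \<ge> N\<close> form
  sets increasing to \<open>K\<close> as \<open>N\<close> grows. On one of large measure the times \<open>k \<ge> N\<close> are
  handled by the triangle inequality through \<open>P\<close>, the times \<open>k < N\<close> by uniform continuity
  of the first \<open>N\<close> iterates of \<open>T\<close>.

  (1) implies (2): bounded complexity gives, for each \<open>n\<close>, \<open>C\<close> centres whose
  \<open>dhat T n\<close>-balls have measure \<open>> 1 - \<epsilon>\<close>. By compactness these centre tuples have a
  limit \<open>z\<^sub>1, \<dots>, z\<^sub>C\<close>, and the sets \<open>D\<^sub>j\<close> of points within \<open>dhat T n\<close>-distance
  \<open>2\<epsilon>\<close> of \<open>z\<^sub>j\<close> for all \<open>n\<close> cover measure \<open>\<ge> 1 - \<epsilon>\<close>. Any two of them are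
  either at positive distance or \<open>8\<epsilon>\<close>-close for every \<open>dhat T n\<close>.
\<close>

section \<open>The orbit pseudometrics\<close>

lemma dbar_nonneg: "0 \<le> dbar T n x y"
  unfolding dbar_def by (simp add: sum_nonneg)

lemma dbar_commute: "dbar T n x y = dbar T n y x"
  unfolding dbar_def by (simp add: dist_commute)

lemma dbar_triangle: "dbar T n x z \<le> dbar T n x y + dbar T n y z"
proof -
  have "(\<Sum>i<n. dist ((T ^^ i) x) ((T ^^ i) z))
      \<le> (\<Sum>i<n. dist ((T ^^ i) x) ((T ^^ i) y) + dist ((T ^^ i) y) ((T ^^ i) z))"
    by (intro sum_mono dist_triangle)
  then show ?thesis
    unfolding dbar_def sum.distrib by (simp add: divide_right_mono flip: add_divide_distrib)
qed

lemma dbar_less: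
  assumes "n \<ge> 1" "\<And>i. i < n \<Longrightarrow> dist ((T ^^ i) x) ((T ^^ i) y) < e"
  shows "dbar T n x y < e"
proof -
  have "(\<Sum>i<n. dist ((T ^^ i) x) ((T ^^ i) y)) < (\<Sum>i<n. e)"
    using assms by (intro sum_strict_mono) (auto simp: lessThan_empty_iff)
  then show ?thesis
    using assms(1) unfolding dbar_def by (simp add: field_simps)
qed

lemma dhat_le_iff: "n \<ge> 1 \<Longrightarrow> dhat T n x y \<le> c \<longleftrightarrow> (\<forall>k\<in>{1..n}. dbar T k x y \<le> c)"
  unfolding dhat_def by (subst Max_le_iff) auto

lemma dhat_less_iff: "n \<ge> 1 \<Longrightarrow> dhat T n x y < c \<longleftrightarrow> (\<forall>k\<in>{1..n}. dbar T k x y < c)"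
  unfolding dhat_def by (subst Max_less_iff) auto

lemma dbar_le_dhat: "k \<in> {1..n} \<Longrightarrow> dbar T k x y \<le> dhat T n x y"
  unfolding dhat_def by (rule Max_ge) auto

lemma dhat_commute: "dhat T n x y = dhat T n y x"
  unfolding dhat_def by (simp add: dbar_commute)

lemma dhat_triangle:
  assumes "n \<ge> 1"
  shows "dhat T n x z \<le> dhat T n x y + dhat T n y z"
  unfolding dhat_le_iff[OF assms]
proof
  fix k assume k: "k \<in> {1..n}"
  have "dbar T k x z \<le> dbar T k x y + dbar T k y z"
    by (rule dbar_triangle)
  also have "\<dots> \<le> dhat T n x y + dhat T n y z"
    using dbar_le_dhat[OF k] by (intro add_mono)
  finally show "dbar T k x z \<le> dhat T n x y + dhat T n y z" .
qed

lemma dhat_mono: "1 \<le> m \<Longrightarrow> m \<le> n \<Longrightarrow> dhat T m x y \<le> dhat T n x y"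
  by (auto simp: dhat_le_iff intro: dbar_le_dhat)

lemma dhat_less:
  assumes "n \<ge> 1" "\<And>i. i < n \<Longrightarrow> dist ((T ^^ i) x) ((T ^^ i) y) < e"
  shows "dhat T n x y < e"
  using assms by (auto simp: dhat_less_iff intro!: dbar_less)

lemma dhat_less_of_head_and_tail:
  assumes "n \<ge> 1"
    and head: "\<And>i. i < N \<Longrightarrow> dist ((T ^^ i) y) ((T ^^ i) y') < e"
    and tail: "\<And>k. N \<le> k \<Longrightarrow> dbar T k x y < e" "\<And>k. N \<le> k \<Longrightarrow> dbar T k x y' < e"
  shows "dhat T n y y' < 2 * e"
  unfolding dhat_less_iff[OF assms(1)]
proof
  fix k assume k: "k \<in> {1..n}"
  show "dbar T k y y' < 2 * e"
  proof (cases "k < N")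
    case True
    then have "dbar T k y y' < e"
      using k head by (intro dbar_less) auto
    moreover have "0 \<le> dbar T k y y'"
      by (rule dbar_nonneg)
    ultimately show ?thesis by linarith
  next
    case False
    have "dbar T k y y' \<le> dbar T k x y + dbar T k x y'"
      using dbar_triangle[of T k y y' x] by (simp only: dbar_commute[of T k y x])
    also have "\<dots> < 2 * e"
      using tail[of k] False by simp
    finally show ?thesis .
  qed
qed

lemma ball_hat_subset_dhat_le:
  assumes "1 \<le> m" "m \<le> n" "dhat T m z x < e"
  shows "ball_hat X T n x e \<subseteq> {y \<in> X. dhat T m z y \<le> 2 * e}"
proof
  fix y assume "y \<in> ball_hat X T n x e"
  then have y: "y \<in> X" "dhat T n x y < e"
    unfolding ball_hat_def by auto
  have "dhat T m z y \<le> dhat T m z x + dhat T m x y"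
    using assms(1) by (rule dhat_triangle)
  also have "\<dots> \<le> 2 * e"
    using assms dhat_mono[OF assms(1,2), of T x y] y(2) by simp
  finally show "y \<in> {y \<in> X. dhat T m z y \<le> 2 * e}"
    using y(1) by simp
qed

section \<open>Equicontinuity in the mean\<close>

definition equicont_in_mean_upto :: "('a::metric_space \<Rightarrow> 'a) \<Rightarrow> real \<Rightarrow> 'a set \<Rightarrow> bool" where
  "equicont_in_mean_upto T \<epsilon> K \<longleftrightarrow>
     (\<exists>\<delta>>0. \<forall>n\<ge>1. \<forall>x\<in>K. \<forall>y\<in>K. dist x y < \<delta> \<longrightarrow> dhat T n x y \<le> \<epsilon>)"

lemma equicont_in_mean_upto_anti:
  assumes "equicont_in_mean_upto T \<epsilon> K" "K' \<subseteq> K" "\<epsilon> \<le> \<epsilon>'"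
  shows "equicont_in_mean_upto T \<epsilon>' K'"
proof -
  obtain \<delta> where "\<delta> > 0" "\<forall>n\<ge>1. \<forall>x\<in>K. \<forall>y\<in>K. dist x y < \<delta> \<longrightarrow> dhat T n x y \<le> \<epsilon>"
    using assms(1) unfolding equicont_in_mean_upto_def by blast
  then show ?thesis
    unfolding equicont_in_mean_upto_def using assms(2,3) by (intro exI[of _ \<delta>]) force
qed

lemma equicont_in_mean_iff_upto:
  "equicont_in_mean T K \<longleftrightarrow> (\<forall>\<epsilon>>0. equicont_in_mean_upto T \<epsilon> K)"
proof (intro iffI allI impI)
  fix \<epsilon> :: real assume "equicont_in_mean T K" "\<epsilon> > 0"
  then show "equicont_in_mean_upto T \<epsilon> K"
    unfolding equicont_in_mean_def equicont_in_mean_upto_def by (meson less_imp_le)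
next
  assume upto: "\<forall>\<epsilon>>0. equicont_in_mean_upto T \<epsilon> K"
  show "equicont_in_mean T K"
    unfolding equicont_in_mean_def
  proof (intro allI impI)
    fix \<epsilon> :: real assume "\<epsilon> > 0"
    then have "equicont_in_mean_upto T (\<epsilon> / 2) K"
      using upto by simp
    then obtain \<delta> where "\<delta> > 0" "\<forall>n\<ge>1. \<forall>x\<in>K. \<forall>y\<in>K. dist x y < \<delta> \<longrightarrow> dhat T n x y \<le> \<epsilon> / 2"
      unfolding equicont_in_mean_upto_def by blast
    then show "\<exists>\<delta>>0. \<forall>n\<ge>1. \<forall>x\<in>K. \<forall>y\<in>K. dist x y < \<delta> \<longrightarrow> dhat T n x y < \<epsilon>"
      using \<open>\<epsilon> > 0\<close> by (intro exI[of _ \<delta>]) force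
  qed
qed

lemma equicont_in_mean_imp_mean_equicont:
  assumes "equicont_in_mean T K"
  shows "mean_equicont T K"
  unfolding mean_equicont_def
proof (intro allI impI)
  fix \<epsilon> :: real assume "\<epsilon> > 0"
  then obtain \<delta> where \<delta>: "\<delta> > 0" "\<forall>n\<ge>1. \<forall>x\<in>K. \<forall>y\<in>K. dist x y < \<delta> \<longrightarrow> dhat T n x y < \<epsilon> / 2"
    using assms[unfolded equicont_in_mean_def, rule_format, of "\<epsilon> / 2"] by auto
  have "limsup (\<lambda>n. ereal (dbar T n x y)) < ereal \<epsilon>"
    if "x \<in> K" "y \<in> K" "dist x y < \<delta>" for x y
  proof -
    have "eventually (\<lambda>n. ereal (dbar T n x y) \<le> ereal (\<epsilon> / 2)) sequentially"
      unfolding eventually_sequentially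
    proof (intro exI[of _ 1] allI impI)
      fix n :: nat assume "1 \<le> n"
      then have "dbar T n x y \<le> dhat T n x y"
        by (intro dbar_le_dhat) simp
      also have "\<dots> < \<epsilon> / 2"
        using \<delta>(2) that \<open>1 \<le> n\<close> by blast
      finally show "ereal (dbar T n x y) \<le> ereal (\<epsilon> / 2)"
        by simp
    qed
    then have "limsup (\<lambda>n. ereal (dbar T n x y)) \<le> ereal (\<epsilon> / 2)"
      by (rule Limsup_bounded)
    also have "\<dots> < ereal \<epsilon>"
      using \<open>\<epsilon> > 0\<close> by simp
    finally show ?thesis .
  qed
  then show "\<exists>\<delta>>0. \<forall>x\<in>K. \<forall>y\<in>K. dist x y < \<delta> \<longrightarrow> limsup (\<lambda>n. ereal (dbar T n x y)) < ereal \<epsilon>"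
    using \<delta>(1) by blast
qed

lemma mu_equicont_in_mean_imp_mu_mean_equicont:
  "mu_equicont_in_mean \<mu> T \<Longrightarrow> mu_mean_equicont \<mu> T"
  unfolding mu_equicont_in_mean_def mu_mean_equicont_def
  using equicont_in_mean_imp_mean_equicont by blast

lemma (in prob_space) prob_INT_ge:
  assumes "range K \<subseteq> events" "\<And>m. prob (K m) \<ge> 1 - b m" "summable b"
  shows "prob (\<Inter>m. K m) \<ge> 1 - (\<Sum>m. b m)"
proof -
  have compl: "prob (space M - K m) \<le> b m" for m
    using assms(1) prob_compl[of "K m"] assms(2)[of m] by auto
  have summable: "summable (\<lambda>m. prob (space M - K m))"
    using compl by (intro summable_comparison_test'[OF assms(3), of 0]) auto
  have "prob (space M - (\<Inter>m. K m)) = prob (\<Union>m. space M - K m)"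
    by (intro arg_cong[where f = prob]) blast
  also have "\<dots> \<le> (\<Sum>m. prob (space M - K m))"
    using assms(1) by (intro finite_measure_subadditive_countably summable) auto
  also have "\<dots> \<le> (\<Sum>m. b m)"
    by (intro suminf_le summable assms(3) compl)
  finally show ?thesis
    using assms(1) prob_compl[of "\<Inter>m. K m"] by (auto intro: sets.countable_INT)
qed

text \<open>Intersect the sets obtained for \<open>\<epsilon> = 1/(m+1)\<close>, whose measure defects
  \<open>\<tau>/2\<^sup>m\<^sup>+\<^sup>2\<close> are summable.\<close>

lemma mu_equicont_in_meanI:
  assumes "prob_space \<mu>"
    and approx: "\<And>\<epsilon> \<eta>. \<epsilon> > 0 \<Longrightarrow> \<eta> > 0 \<Longrightarrow>
      \<exists>K\<in>sets \<mu>. measure \<mu> K \<ge> 1 - \<eta> \<and> equicont_in_mean_upto T \<epsilon> K"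
  shows "mu_equicont_in_mean \<mu> T"
  unfolding mu_equicont_in_mean_def
proof (intro allI impI)
  interpret prob_space \<mu> by (fact assms(1))
  fix \<tau> :: real assume "\<tau> > 0"
  define b where "b m = \<tau> / 4 * (1 / 2) ^ m" for m
  have b: "b sums (\<tau> / 2)"
    unfolding b_def using sums_mult[OF geometric_sums[of "1 / 2 :: real"], of "\<tau> / 4"] by simp
  have "\<forall>m. \<exists>K. K \<in> sets \<mu> \<and> prob K \<ge> 1 - b m \<and> equicont_in_mean_upto T (1 / Suc m) K"
  proof
    fix m
    have "b m > 0"
      using \<open>\<tau> > 0\<close> by (simp add: b_def)
    then show "\<exists>K. K \<in> sets \<mu> \<and> prob K \<ge> 1 - b m \<and> equicont_in_mean_upto T (1 / Suc m) K"
      using approx[of "1 / Suc m" "b m"] by auto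
  qed
  then obtain K where K: "\<And>m. K m \<in> sets \<mu>" "\<And>m. prob (K m) \<ge> 1 - b m"
    "\<And>m. equicont_in_mean_upto T (1 / Suc m) (K m)"
    by metis
  have "prob (\<Inter>m. K m) \<ge> 1 - \<tau> / 2"
    using prob_INT_ge[of K b] K(1,2) b by (force simp: sums_iff)
  then have "prob (\<Inter>m. K m) > 1 - \<tau>"
    using \<open>\<tau> > 0\<close> by linarith
  moreover have "equicont_in_mean T (\<Inter>m. K m)"
    unfolding equicont_in_mean_iff_upto
  proof (intro allI impI)
    fix \<epsilon> :: real assume "\<epsilon> > 0"
    then obtain m where "1 / Suc m < \<epsilon>"
      using reals_Archimedean by (auto simp: inverse_eq_divide)
    then show "equicont_in_mean_upto T \<epsilon> (\<Inter>m. K m)"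
      using K(3)[of m] by (auto elim: equicont_in_mean_upto_anti)
  qed
  ultimately show "\<exists>K\<in>sets \<mu>. prob K > 1 - \<tau> \<and> equicont_in_mean T K"
    using K(1) by blast
qed

lemma mean_equicont_tail_sets_exhaust:
  assumes "finite P" "P \<subseteq> K"
    and "\<And>x y. x \<in> K \<Longrightarrow> y \<in> K \<Longrightarrow> dist x y < \<delta> \<Longrightarrow> limsup (\<lambda>n. ereal (dbar T n x y)) < ereal e"
  shows "(\<Union>N. {y \<in> K. \<forall>x\<in>P. dist x y < \<delta> \<longrightarrow> (\<forall>n\<ge>N. dbar T n x y < e)}) = K"
proof (intro equalityI subsetI)
  fix y assume y: "y \<in> K"
  have "\<forall>x\<in>P. eventually (\<lambda>n. dist x y < \<delta> \<longrightarrow> dbar T n x y < e) sequentially"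
  proof
    fix x assume "x \<in> P"
    show "eventually (\<lambda>n. dist x y < \<delta> \<longrightarrow> dbar T n x y < e) sequentially"
    proof (cases "dist x y < \<delta>")
      case True
      then have "eventually (\<lambda>n. ereal (dbar T n x y) < ereal e) sequentially"
        using assms(2,3) \<open>x \<in> P\<close> y by (intro Limsup_lessD) auto
      then show ?thesis
        by (rule eventually_mono) simp
    qed simp
  qed
  then have "eventually (\<lambda>n. \<forall>x\<in>P. dist x y < \<delta> \<longrightarrow> dbar T n x y < e) sequentially"
    by (rule eventually_ball_finite[OF assms(1)])
  then show "y \<in> (\<Union>N. {y \<in> K. \<forall>x\<in>P. dist x y < \<delta> \<longrightarrow> (\<forall>n\<ge>N. dbar T n x y < e)})"
    using y unfolding eventually_sequentially by blast
qed auto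

lemma ex_pos_ball_finite:
  fixes P :: "'i \<Rightarrow> real \<Rightarrow> bool"
  assumes "finite I" "\<And>i. i \<in> I \<Longrightarrow> \<exists>r>0. P i r"
    and down: "\<And>i r s. P i r \<Longrightarrow> 0 < s \<Longrightarrow> s \<le> r \<Longrightarrow> P i s"
  shows "\<exists>r>0. \<forall>i\<in>I. P i r"
proof -
  have "\<forall>i\<in>I. eventually (P i) (at_right 0)"
  proof
    fix i assume "i \<in> I"
    then obtain r where "r > 0" "P i r"
      using assms(2) by blast
    then show "eventually (P i) (at_right 0)"
      unfolding eventually_at_right_field using down by (intro exI[of _ r]) auto
  qed
  then have "eventually (\<lambda>r. \<forall>i\<in>I. P i r) (at_right 0)"
    by (rule eventually_ball_finite[OF assms(1)])
  then obtain b where "b > 0" "\<forall>r>0. r < b \<longrightarrow> (\<forall>i\<in>I. P i r)"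
    unfolding eventually_at_right_field by auto
  then show ?thesis
    by (intro exI[of _ "b / 2"]) auto
qed

lemma uniform_on_finite_Union:
  assumes "finite I"
    and "\<And>i j. i \<in> I \<Longrightarrow> j \<in> I \<Longrightarrow> \<exists>\<delta>>0. \<forall>y\<in>D i. \<forall>y'\<in>D j. dist y y' < \<delta> \<longrightarrow> R y y'"
  shows "\<exists>\<delta>>0. \<forall>y\<in>(\<Union>i\<in>I. D i). \<forall>y'\<in>(\<Union>i\<in>I. D i). dist y y' < \<delta> \<longrightarrow> R y y'"
proof -
  have "\<exists>\<delta>>0. \<forall>p\<in>I \<times> I. \<forall>y\<in>D (fst p). \<forall>y'\<in>D (snd p). dist y y' < \<delta> \<longrightarrow> R y y'"
    using assms
    by (intro ex_pos_ball_finite[where P = "\<lambda>p \<delta>. \<forall>y\<in>D (fst p). \<forall>y'\<in>D (snd p). dist y y' < \<delta> \<longrightarrow> R y y'"])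
      auto
  then obtain \<delta> where "\<delta> > 0"
    "\<And>i j y y'. i \<in> I \<Longrightarrow> j \<in> I \<Longrightarrow> y \<in> D i \<Longrightarrow> y' \<in> D j \<Longrightarrow> dist y y' < \<delta> \<Longrightarrow> R y y'"
    by fastforce
  then show ?thesis
    by blast
qed

lemma compact_finite_net_within:
  fixes X :: "'a::metric_space set"
  assumes "compact X" "K \<subseteq> X" "e > 0"
  obtains P where "finite P" "P \<subseteq> K" "K \<subseteq> (\<Union>x\<in>P. ball x e)"
proof -
  have "Met_TC.mtotally_bounded X"
    using assms(1) by (intro Met_TC.compactin_imp_mtotally_bounded) simp
  then have "Met_TC.mtotally_bounded K"
    using assms(2) by (rule Met_TC.mtotally_bounded_subset)
  then show ?thesis
    using assms(3) that unfolding Met_TC.mtotally_bounded_def by auto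
qed

lemma INT_UN_decseq_finite:
  assumes "finite I" "\<And>i. i \<in> I \<Longrightarrow> decseq (B i)"
  shows "(\<Inter>m. \<Union>i\<in>I. B i m) = (\<Union>i\<in>I. \<Inter>m. B i m)"
proof (intro equalityI subsetI)
  fix x assume x: "x \<in> (\<Inter>m. \<Union>i\<in>I. B i m)"
  show "x \<in> (\<Union>i\<in>I. \<Inter>m. B i m)"
  proof (rule ccontr)
    assume "x \<notin> (\<Union>i\<in>I. \<Inter>m. B i m)"
    have "eventually (\<lambda>m. x \<notin> B i m) sequentially" if i: "i \<in> I" for i
    proof -
      obtain m0 where "x \<notin> B i m0"
        using \<open>x \<notin> (\<Union>i\<in>I. \<Inter>m. B i m)\<close> i by auto
      then show ?thesis
        using assms(2)[OF i] unfolding eventually_sequentially decseq_def by (intro exI[of _ m0]) auto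
    qed
    then have "\<forall>i\<in>I. eventually (\<lambda>m. x \<notin> B i m) sequentially"
      by blast
    then have "eventually (\<lambda>m. \<forall>i\<in>I. x \<notin> B i m) sequentially"
      by (rule eventually_ball_finite[OF assms(1)])
    then show False
      using x by (auto simp: eventually_sequentially)
  qed
qed auto

lemma finite_subset_indexed:
  assumes "finite F" "card F \<le> C" "F \<subseteq> X" "x0 \<in> X"
  obtains g where "\<And>j. g j \<in> X" "F \<subseteq> g ` {..<C}"
proof -
  obtain h where h: "bij_betw h {0..<card F} F"
    using ex_bij_betw_nat_finite[OF assms(1)] by blast
  define g where "g j = (if j < card F then h j else x0)" for j
  have "g j \<in> X" for j
    using h assms(3,4) by (auto simp: g_def bij_betw_def)
  moreover have "F \<subseteq> g ` {..<C}"
  proof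
    fix x assume "x \<in> F"
    then have "x \<in> h ` {0..<card F}"
      using h by (simp add: bij_betw_def)
    then obtain j where "j < card F" "x = h j"
      by auto
    then show "x \<in> g ` {..<C}"
      using assms(2) by (intro image_eqI[of _ _ j]) (auto simp: g_def)
  qed
  ultimately show ?thesis
    by (rule that)
qed

lemma seq_compact_convergent_subseq_finite:
  fixes f :: "nat \<Rightarrow> nat \<Rightarrow> 'a::metric_space"
  assumes "seq_compact X" "\<And>n j. f n j \<in> X"
  obtains r z where "strict_mono r" "\<And>j. z j \<in> X" "\<And>j. j < C \<Longrightarrow> (\<lambda>k. f (r k) j) \<longlonglongrightarrow> z j"
proof -
  have "\<exists>r z. strict_mono r \<and> (\<forall>j. z j \<in> X) \<and> (\<forall>j<C. (\<lambda>k. f (r k) j) \<longlonglongrightarrow> z j)"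
  proof (induction C)
    case 0
    then show ?case
      using assms(2) by (intro exI[of _ id] exI[of _ "f 0"]) (auto simp: strict_mono_def)
  next
    case (Suc C)
    then obtain r z where rz: "strict_mono r" "\<forall>j. z j \<in> X" "\<forall>j<C. (\<lambda>k. f (r k) j) \<longlonglongrightarrow> z j"
      by blast
    obtain l r' where l: "l \<in> X" "strict_mono r'" "((\<lambda>k. f (r k) C) \<circ> r') \<longlonglongrightarrow> l"
      using seq_compactE[OF assms(1), of "\<lambda>k. f (r k) C"] assms(2) by blast
    have "(\<lambda>k. f (r (r' k)) j) \<longlonglongrightarrow> (z(C := l)) j" if "j < Suc C" for j
    proof (cases "j = C")
      case True
      then show ?thesis using l(3) by (simp add: o_def)
    next
      case False
      then show ?thesis
        using LIMSEQ_subseq_LIMSEQ[of "\<lambda>k. f (r k) j" "z j" r'] rz(3) l(2) that by (simp add: o_def)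
    qed
    moreover have "strict_mono (\<lambda>k. r (r' k))"
      using strict_mono_o[OF rz(1) l(2)] by (simp add: o_def)
    ultimately show ?case
      using rz(2) l(1) by (intro exI[of _ "\<lambda>k. r (r' k)"] exI[of _ "z(C := l)"]) auto
  qed
  then show ?thesis
    using that by blast
qed

section \<open>Measured topological dynamical systems\<close>

locale measured_tds =
  fixes X :: "'a::metric_space set" and T :: "'a \<Rightarrow> 'a" and \<mu> :: "'a measure"
  assumes tds: "tds X T"
    and prob_space_\<mu>: "prob_space \<mu>"
    and sets_eq: "sets \<mu> = sets (restrict_space borel X)"
    and space_eq: "space \<mu> = X"
begin

sublocale prob_space \<mu>
  by (fact prob_space_\<mu>)

lemma compact_X: "compact X" and continuous_T: "continuous_on X T" and T_maps: "T ` X \<subseteq> X"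
  using tds unfolding tds_def by auto

lemma prob_X: "prob X = 1"
  using prob_space space_eq by simp

lemma iterate_maps: "(T ^^ i) ` X \<subseteq> X"
  by (induction i) (use T_maps in auto)

lemma continuous_on_iterate: "continuous_on X (T ^^ i)"
proof (induction i)
  case 0
  then show ?case
    by (simp add: continuous_on_id)
next
  case (Suc i)
  have "continuous_on X (T \<circ> (T ^^ i))"
    using Suc continuous_on_subset[OF continuous_T iterate_maps] by (rule continuous_on_compose)
  then show ?case
    by (simp add: o_def)
qed

lemma uniformly_close_iterates:
  assumes "e > 0"
  shows "\<exists>r>0. \<forall>x\<in>X. \<forall>y\<in>X. dist x y < r \<longrightarrow> (\<forall>i<n. dist ((T ^^ i) x) ((T ^^ i) y) < e)"
proof -
  have "\<exists>r>0. \<forall>x\<in>X. \<forall>y\<in>X. dist x y < r \<longrightarrow> dist ((T ^^ i) x) ((T ^^ i) y) < e" for i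
    using compact_uniformly_continuous[OF continuous_on_iterate compact_X, of i,
        unfolded uniformly_continuous_on_def, rule_format, OF assms]
    by fast
  then have "\<exists>r>0. \<forall>i\<in>{..<n}. \<forall>x\<in>X. \<forall>y\<in>X. dist x y < r \<longrightarrow> dist ((T ^^ i) x) ((T ^^ i) y) < e"
    by (intro ex_pos_ball_finite[where P = "\<lambda>i r. \<forall>x\<in>X. \<forall>y\<in>X. dist x y < r \<longrightarrow> dist ((T ^^ i) x) ((T ^^ i) y) < e"])
      auto
  then show ?thesis
    by auto
qed

lemma uniformly_close_dhat:
  assumes "e > 0" "n \<ge> 1"
  shows "\<exists>r>0. \<forall>x\<in>X. \<forall>y\<in>X. dist x y < r \<longrightarrow> dhat T n x y < e"
proof -
  obtain r where "r > 0" "\<forall>x\<in>X. \<forall>y\<in>X. dist x y < r \<longrightarrow> (\<forall>i<n. dist ((T ^^ i) x) ((T ^^ i) y) < e)"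
    using uniformly_close_iterates[OF assms(1)] by blast
  then show ?thesis
    using assms(2) by (intro exI[of _ r]) (auto intro: dhat_less)
qed

lemma continuous_on_dbar: "continuous_on X (\<lambda>y. dbar T k x y)"
proof -
  have "continuous_on X (\<lambda>y. dist ((T ^^ i) x) ((T ^^ i) y))" for i
    by (intro continuous_intros continuous_on_iterate)
  then show ?thesis
    unfolding dbar_def by (intro continuous_on_mult_left continuous_on_sum) blast
qed

lemma borel_measurable_continuous: "continuous_on X f \<Longrightarrow> (f :: 'a \<Rightarrow> real) \<in> borel_measurable \<mu>"
  using borel_measurable_continuous_on_restrict[of X f] measurable_cong_sets[OF sets_eq refl] by blast

lemma measurable_dbar[measurable]: "(\<lambda>y. dbar T n x y) \<in> borel_measurable \<mu>"
  by (rule borel_measurable_continuous[OF continuous_on_dbar])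

lemma measurable_dist[measurable]: "(\<lambda>y. dist x y) \<in> borel_measurable \<mu>"
  by (intro borel_measurable_continuous continuous_intros)

lemma measurable_dhat[measurable]: "(\<lambda>y. dhat T n x y) \<in> borel_measurable \<mu>"
  unfolding dhat_def by measurable

lemma sets_ball_hat[measurable]: "ball_hat X T n x e \<in> sets \<mu>"
  unfolding ball_hat_def space_eq[symmetric] by measurable

lemma sets_dhat_le[measurable]: "{y \<in> X. dhat T n x y \<le> c} \<in> sets \<mu>"
  unfolding space_eq[symmetric] by measurable

lemma sets_dhat_le_all: "{y \<in> X. \<forall>n\<ge>1. dhat T n x y \<le> c} \<in> sets \<mu>"
  unfolding space_eq[symmetric] by measurable

lemma span_hat_le_card:
  assumes "finite F" "F \<subseteq> X" "prob (\<Union>x\<in>F. ball_hat X T n x \<epsilon>) > 1 - \<epsilon>"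
  shows "span_hat \<mu> X T n \<epsilon> \<le> card F"
  unfolding span_hat_def by (rule Least_le) (use assms in blast)

lemma span_hat_attained:
  assumes "n \<ge> 1" "\<epsilon> > 0"
  obtains F where "finite F" "F \<subseteq> X" "card F = span_hat \<mu> X T n \<epsilon>"
    "prob (\<Union>x\<in>F. ball_hat X T n x \<epsilon>) > 1 - \<epsilon>"
proof -
  obtain r where r: "r > 0" "\<forall>x\<in>X. \<forall>y\<in>X. dist x y < r \<longrightarrow> dhat T n x y < \<epsilon>"
    using uniformly_close_dhat[OF assms(2,1)] by blast
  obtain F where F: "finite F" "F \<subseteq> X" "X \<subseteq> (\<Union>x\<in>F. ball x r)"
    using compact_finite_net_within[OF compact_X order_refl r(1)] .
  have "X \<subseteq> (\<Union>x\<in>F. ball_hat X T n x \<epsilon>)"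
  proof
    fix y assume "y \<in> X"
    then obtain x where "x \<in> F" "dist x y < r"
      using F(3) by auto
    then show "y \<in> (\<Union>x\<in>F. ball_hat X T n x \<epsilon>)"
      using r(2) F(2) \<open>y \<in> X\<close> unfolding ball_hat_def by blast
  qed
  then have "(\<Union>x\<in>F. ball_hat X T n x \<epsilon>) = X"
    unfolding ball_hat_def by blast
  then have "\<exists>k F. finite F \<and> F \<subseteq> X \<and> card F = k \<and> prob (\<Union>x\<in>F. ball_hat X T n x \<epsilon>) > 1 - \<epsilon>"
    using F(1,2) prob_X assms(2) by auto
  then have "\<exists>F'. finite F' \<and> F' \<subseteq> X \<and> card F' = span_hat \<mu> X T n \<epsilon> \<and>
      prob (\<Union>x\<in>F'. ball_hat X T n x \<epsilon>) > 1 - \<epsilon>"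
    unfolding span_hat_def by (rule LeastI_ex)
  then show ?thesis
    using that by blast
qed

lemma indexed_cover_of_span_hat_le:
  assumes "n \<ge> 1" "e > 0" "span_hat \<mu> X T n e \<le> C"
  obtains g where "\<And>j. g j \<in> X" "prob (\<Union>j<C. ball_hat X T n (g j) e) > 1 - e"
proof -
  obtain F where F: "finite F" "F \<subseteq> X" "card F = span_hat \<mu> X T n e"
    "prob (\<Union>x\<in>F. ball_hat X T n x e) > 1 - e"
    using span_hat_attained[OF assms(1,2)] .
  obtain x0 where "x0 \<in> X"
    using prob_X by force
  then obtain g where g: "\<And>j. g j \<in> X" "F \<subseteq> g ` {..<C}"
    using finite_subset_indexed[OF F(1) _ F(2)] F(3) assms(3) by metis
  have "(\<Union>x\<in>F. ball_hat X T n x e) \<subseteq> (\<Union>j<C. ball_hat X T n (g j) e)"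
    using g(2) by blast
  then have "prob (\<Union>x\<in>F. ball_hat X T n x e) \<le> prob (\<Union>j<C. ball_hat X T n (g j) e)"
    by (rule finite_measure_mono) measurable
  then have "prob (\<Union>j<C. ball_hat X T n (g j) e) > 1 - e"
    using F(4) by linarith
  with g(1) show ?thesis
    by (rule that)
qed

lemma limit_of_indexed_covers:
  fixes C :: nat
  assumes "e > 0" "\<And>n. n \<ge> 1 \<Longrightarrow> \<exists>g. (\<forall>j. g j \<in> X) \<and> prob (\<Union>j<C. ball_hat X T n (g j) e) > 1 - e"
  obtains z where "\<And>j. z j \<in> X" "\<And>n. n \<ge> 1 \<Longrightarrow> prob (\<Union>j<C. {y \<in> X. dhat T n (z j) y \<le> 2 * e}) > 1 - e"
proof -
  have "\<forall>k. \<exists>g. (\<forall>j. g j \<in> X) \<and> prob (\<Union>j<C. ball_hat X T (Suc k) (g j) e) > 1 - e"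
    using assms(2) by simp
  then obtain G where G: "\<And>k j. G k j \<in> X" "\<And>k. prob (\<Union>j<C. ball_hat X T (Suc k) (G k j) e) > 1 - e"
    by metis
  obtain r z where rz: "strict_mono r" "\<And>j. z j \<in> X" "\<And>j. j < C \<Longrightarrow> (\<lambda>k. G (r k) j) \<longlonglongrightarrow> z j"
    using seq_compact_convergent_subseq_finite[where f = G and C = C, OF compact_imp_seq_compact[OF compact_X] G(1)]
    by blast
  have "prob (\<Union>j<C. {y \<in> X. dhat T n (z j) y \<le> 2 * e}) > 1 - e" if n: "n \<ge> 1" for n
  proof -
    obtain \<rho> where \<rho>: "\<rho> > 0" "\<forall>x\<in>X. \<forall>y\<in>X. dist x y < \<rho> \<longrightarrow> dhat T n x y < e"
      using uniformly_close_dhat[OF assms(1) n] by blast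
    have "\<forall>j\<in>{..<C}. eventually (\<lambda>k. dist (G (r k) j) (z j) < \<rho>) sequentially"
      using rz(3) \<rho>(1) by (auto intro: tendstoD)
    then have "eventually (\<lambda>k. \<forall>j\<in>{..<C}. dist (G (r k) j) (z j) < \<rho>) sequentially"
      by (rule eventually_ball_finite[OF finite_lessThan])
    moreover have "eventually (\<lambda>k. n \<le> Suc (r k)) sequentially"
      unfolding eventually_sequentially using seq_suble[OF rz(1)] le_SucI order_trans by blast
    ultimately obtain k where k: "\<forall>j<C. dist (G (r k) j) (z j) < \<rho>" "n \<le> Suc (r k)"
      unfolding eventually_sequentially by (metis lessThan_iff order_refl max.cobounded1 max.cobounded2)
    have "ball_hat X T (Suc (r k)) (G (r k) j) e \<subseteq> {y \<in> X. dhat T n (z j) y \<le> 2 * e}" if "j < C" for j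
      using k that \<rho>(2) G(1) rz(2) by (intro ball_hat_subset_dhat_le[OF n]) (auto simp: dist_commute)
    then have "prob (\<Union>j<C. ball_hat X T (Suc (r k)) (G (r k) j) e)
        \<le> prob (\<Union>j<C. {y \<in> X. dhat T n (z j) y \<le> 2 * e})"
      by (intro finite_measure_mono UN_mono) measurable
    then show ?thesis
      using G(2)[of "r k"] by linarith
  qed
  then show ?thesis
    using that rz(2) by blast
qed

text \<open>Either the two sets are at positive distance, or they contain points \<open>w, w'\<close> so close
  that \<open>dhat T n w w'\<close> is negligible, and the chain \<open>y, z, w, w', z', y'\<close> gives the bound.\<close>

lemma dhat_bound_across_balls:
  assumes "D \<subseteq> X" "D' \<subseteq> X"
    and D: "\<And>y n. y \<in> D \<Longrightarrow> n \<ge> 1 \<Longrightarrow> dhat T n z y \<le> r"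
    and D': "\<And>y n. y \<in> D' \<Longrightarrow> n \<ge> 1 \<Longrightarrow> dhat T n z' y \<le> r"
  shows "\<exists>\<delta>>0. \<forall>y\<in>D. \<forall>y'\<in>D'. dist y y' < \<delta> \<longrightarrow> (\<forall>n\<ge>1. dhat T n y y' \<le> 4 * r)"
proof (cases "\<exists>\<delta>>0. \<forall>w\<in>D. \<forall>w'\<in>D'. \<delta> \<le> dist w w'")
  case True
  then show ?thesis
    by (meson not_less)
next
  case False
  have "dhat T n y y' \<le> 4 * r" if y: "y \<in> D" "y' \<in> D'" and n: "n \<ge> 1" for y y' n
  proof (rule field_le_epsilon)
    fix e :: real assume "e > 0"
    obtain \<rho> where \<rho>: "\<rho> > 0" "\<forall>x\<in>X. \<forall>y\<in>X. dist x y < \<rho> \<longrightarrow> dhat T n x y < e"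
      using uniformly_close_dhat[OF \<open>e > 0\<close> n] by blast
    obtain w w' where w: "w \<in> D" "w' \<in> D'" "dist w w' < \<rho>"
      using False \<rho>(1) by (auto simp: not_le)
    have tri: "dhat T n a c \<le> dhat T n a b + dhat T n b c" for a b c
      using n by (rule dhat_triangle)
    have "dhat T n y z \<le> r" "dhat T n w' z' \<le> r"
      using D[OF y(1) n] D'[OF w(2) n] by (simp_all add: dhat_commute)
    moreover have "dhat T n z w \<le> r" "dhat T n z' y' \<le> r" "dhat T n w w' < e"
      using D[OF w(1) n] D'[OF y(2) n] \<rho>(2) w assms(1,2) by auto
    ultimately show "dhat T n y y' \<le> 4 * r + e"
      using tri[of y y' z] tri[of z y' w] tri[of w y' w'] tri[of w' y' z'] by linarith
  qed
  then show ?thesis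
    by (intro exI[of _ 1]) auto
qed

lemma mu_equicont_in_mean_imp_bounded_complexity:
  assumes "mu_equicont_in_mean \<mu> T"
  shows "bounded_complexity \<mu> X T"
  unfolding bounded_complexity_def
proof (intro allI impI)
  fix \<epsilon> :: real assume "\<epsilon> > 0"
  then obtain K where K: "K \<in> sets \<mu>" "prob K > 1 - \<epsilon>" "equicont_in_mean T K"
    using assms unfolding mu_equicont_in_mean_def by blast
  then obtain \<delta> where \<delta>: "\<delta> > 0" "\<forall>n\<ge>1. \<forall>x\<in>K. \<forall>y\<in>K. dist x y < \<delta> \<longrightarrow> dhat T n x y < \<epsilon>"
    using \<open>\<epsilon> > 0\<close> unfolding equicont_in_mean_def by blast
  have "K \<subseteq> X"
    using sets.sets_into_space[OF K(1)] space_eq by simp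
  then obtain P where P: "finite P" "P \<subseteq> K" "K \<subseteq> (\<Union>x\<in>P. ball x \<delta>)"
    using compact_finite_net_within[OF compact_X _ \<delta>(1)] by blast
  have "span_hat \<mu> X T n \<epsilon> \<le> card P" if n: "n \<ge> 1" for n
  proof (rule span_hat_le_card[OF P(1)])
    show "P \<subseteq> X"
      using P(2) \<open>K \<subseteq> X\<close> by blast
    have "K \<subseteq> (\<Union>x\<in>P. ball_hat X T n x \<epsilon>)"
    proof
      fix y assume "y \<in> K"
      then obtain x where "x \<in> P" "dist x y < \<delta>"
        using P(3) by auto
      then show "y \<in> (\<Union>x\<in>P. ball_hat X T n x \<epsilon>)"
        using \<delta>(2) n P(2) \<open>y \<in> K\<close> \<open>K \<subseteq> X\<close> unfolding ball_hat_def by blast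
    qed
    then have "prob K \<le> prob (\<Union>x\<in>P. ball_hat X T n x \<epsilon>)"
      by (rule finite_measure_mono) (intro sets.finite_UN P(1) sets_ball_hat)
    then show "prob (\<Union>x\<in>P. ball_hat X T n x \<epsilon>) > 1 - \<epsilon>"
      using K(2) by linarith
  qed
  then show "\<exists>C>0. \<forall>n\<ge>1. span_hat \<mu> X T n \<epsilon> \<le> C"
    by (intro exI[of _ "Suc (card P)"]) (auto intro: le_SucI)
qed

lemma tail_set_equicont_in_mean_upto:
  assumes "K \<subseteq> X" "K \<subseteq> (\<Union>x\<in>P. ball x (\<delta> / 2))" "\<delta> > 0" "e > 0"
  shows "equicont_in_mean_upto T (2 * e)
    {y \<in> K. \<forall>x\<in>P. dist x y < \<delta> \<longrightarrow> (\<forall>n\<ge>N. dbar T n x y < e)}" (is "equicont_in_mean_upto T _ ?H")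
proof -
  obtain \<rho> where \<rho>: "\<rho> > 0" "\<forall>x\<in>X. \<forall>y\<in>X. dist x y < \<rho> \<longrightarrow> (\<forall>i<N. dist ((T ^^ i) x) ((T ^^ i) y) < e)"
    using uniformly_close_iterates[OF assms(4)] by blast
  have "dhat T n y y' < 2 * e"
    if n: "n \<ge> 1" and y: "y \<in> ?H" "y' \<in> ?H" and close: "dist y y' < min (\<delta> / 2) \<rho>" for n y y'
  proof -
    obtain x where x: "x \<in> P" "dist x y < \<delta> / 2"
      using assms(2) y(1) by auto
    have "dist x y < \<delta>" "dist x y' < \<delta>"
      using dist_triangle[of x y' y] x(2) close assms(3) by linarith+
    then show ?thesis
      using y x(1) \<rho>(2) close assms(1)
      by (intro dhat_less_of_head_and_tail[OF n, where N = N and x = x]) auto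
  qed
  moreover have "min (\<delta> / 2) \<rho> > 0"
    using \<rho>(1) assms(3) by simp
  ultimately show ?thesis
    unfolding equicont_in_mean_upto_def by (intro exI[of _ "min (\<delta> / 2) \<rho>"]) (auto intro: less_imp_le)
qed

lemma mean_equicont_large_subset:
  assumes "K \<in> sets \<mu>" "mean_equicont T K" "\<epsilon> > 0" "\<eta> > 0"
  shows "\<exists>H\<in>sets \<mu>. prob H > prob K - \<eta> \<and> equicont_in_mean_upto T \<epsilon> H"
proof -
  define e where "e = \<epsilon> / 2"
  have "e > 0"
    using assms(3) by (simp add: e_def)
  then obtain \<delta> where \<delta>: "\<delta> > 0"
    "\<And>x y. x \<in> K \<Longrightarrow> y \<in> K \<Longrightarrow> dist x y < \<delta> \<Longrightarrow> limsup (\<lambda>n. ereal (dbar T n x y)) < ereal e"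
    using assms(2)[unfolded mean_equicont_def, rule_format, OF \<open>e > 0\<close>] by blast
  have "K \<subseteq> X"
    using sets.sets_into_space[OF assms(1)] space_eq by simp
  then obtain P where P: "finite P" "P \<subseteq> K" "K \<subseteq> (\<Union>x\<in>P. ball x (\<delta> / 2))"
    using compact_finite_net_within[OF compact_X, of K "\<delta> / 2"] \<delta>(1) by auto
  define H where "H N = {y \<in> K. \<forall>x\<in>P. dist x y < \<delta> \<longrightarrow> (\<forall>n\<ge>N. dbar T n x y < e)}" for N
  have H_sets: "H N \<in> sets \<mu>" for N
  proof -
    have "H N = K \<inter> {y \<in> space \<mu>. \<forall>x\<in>P. dist x y < \<delta> \<longrightarrow> (\<forall>n\<ge>N. dbar T n x y < e)}"
      using \<open>K \<subseteq> X\<close> space_eq unfolding H_def by auto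
    also have "\<dots> \<in> sets \<mu>"
      using assms(1) P(1) by measurable
    finally show ?thesis .
  qed
  have "incseq H"
    unfolding H_def incseq_def by auto
  then have "(\<lambda>N. prob (H N)) \<longlonglongrightarrow> prob K"
    using finite_Lim_measure_incseq[of H] H_sets mean_equicont_tail_sets_exhaust[OF P(1,2) \<delta>(2)]
    unfolding H_def by auto
  then obtain N where "prob (H N) > prob K - \<eta>"
    using assms(4) order_tendstoD(1)[of _ "prob K" sequentially "prob K - \<eta>"]
    by (auto simp: eventually_sequentially)
  moreover have "equicont_in_mean_upto T \<epsilon> (H N)"
    using tail_set_equicont_in_mean_upto[OF \<open>K \<subseteq> X\<close> P(3) \<delta>(1) \<open>e > 0\<close>, of N]
    unfolding H_def e_def by simp
  ultimately show ?thesis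
    using H_sets by blast
qed

lemma mu_mean_equicont_imp_mu_equicont_in_mean:
  assumes "mu_mean_equicont \<mu> T"
  shows "mu_equicont_in_mean \<mu> T"
proof (rule mu_equicont_in_meanI[OF prob_space_\<mu>])
  fix \<epsilon> \<eta> :: real assume "\<epsilon> > 0" "\<eta> > 0"
  then obtain K where K: "K \<in> sets \<mu>" "prob K > 1 - \<eta> / 2" "mean_equicont T K"
    using assms unfolding mu_mean_equicont_def by (meson half_gt_zero)
  then obtain H where "H \<in> sets \<mu>" "prob H > prob K - \<eta> / 2" "equicont_in_mean_upto T \<epsilon> H"
    using mean_equicont_large_subset[OF K(1,3) \<open>\<epsilon> > 0\<close>, of "\<eta> / 2"] \<open>\<eta> > 0\<close> by auto
  then show "\<exists>K\<in>sets \<mu>. prob K \<ge> 1 - \<eta> \<and> equicont_in_mean_upto T \<epsilon> K"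
    using K(2) by (intro bexI[of _ H]) auto
qed

lemma prob_dhat_balls_all_times:
  fixes C :: nat
  assumes "\<And>n. n \<ge> 1 \<Longrightarrow> prob (\<Union>j<C. {y \<in> X. dhat T n (z j) y \<le> r}) > 1 - e"
  shows "prob (\<Union>j<C. {y \<in> X. \<forall>n\<ge>1. dhat T n (z j) y \<le> r}) \<ge> 1 - e"
proof -
  define B where "B j m = {y \<in> X. dhat T (Suc m) (z j) y \<le> r}" for j m
  have "decseq (B j)" for j
    unfolding B_def decseq_def by (auto intro: order_trans[OF dhat_mono])
  moreover have "{y \<in> X. \<forall>n\<ge>1. dhat T n (z j) y \<le> r} = (\<Inter>m. B j m)" for j
    unfolding B_def by (auto dest: Suc_le_D)
  ultimately have eq: "(\<Union>j<C. {y \<in> X. \<forall>n\<ge>1. dhat T n (z j) y \<le> r}) = (\<Inter>m. \<Union>j<C. B j m)"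
    using INT_UN_decseq_finite[of "{..<C}" B] by simp
  have "decseq (\<lambda>m. \<Union>j<C. B j m)"
    using \<open>\<And>j. decseq (B j)\<close> unfolding decseq_def by blast
  moreover have "(\<Union>j<C. B j m) \<in> sets \<mu>" for m
    unfolding B_def by measurable
  ultimately have "(\<lambda>m. prob (\<Union>j<C. B j m)) \<longlonglongrightarrow> prob (\<Inter>m. \<Union>j<C. B j m)"
    by (intro finite_Lim_measure_decseq) auto
  moreover have "prob (\<Union>j<C. B j m) > 1 - e" for m
    using assms[of "Suc m"] by (simp add: B_def)
  ultimately show ?thesis
    unfolding eq by (intro LIMSEQ_le_const) (auto intro: less_imp_le)
qed

lemma bounded_complexity_imp_mu_equicont_in_mean:
  assumes "bounded_complexity \<mu> X T"
  shows "mu_equicont_in_mean \<mu> T"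
proof (rule mu_equicont_in_meanI[OF prob_space_\<mu>])
  fix \<epsilon> \<eta> :: real assume "\<epsilon> > 0" "\<eta> > 0"
  define e where "e = min (\<epsilon> / 8) \<eta>"
  have "e > 0"
    using \<open>\<epsilon> > 0\<close> \<open>\<eta> > 0\<close> by (simp add: e_def)
  then obtain C where C: "\<And>n. n \<ge> 1 \<Longrightarrow> span_hat \<mu> X T n e \<le> C"
    using assms unfolding bounded_complexity_def by blast
  have "\<exists>g. (\<forall>j. g j \<in> X) \<and> prob (\<Union>j<C. ball_hat X T n (g j) e) > 1 - e" if "n \<ge> 1" for n
    using indexed_cover_of_span_hat_le[OF that \<open>e > 0\<close> C[OF that]] by blast
  then obtain z where z: "\<And>j. z j \<in> X"
    "\<And>n. n \<ge> 1 \<Longrightarrow> prob (\<Union>j<C. {y \<in> X. dhat T n (z j) y \<le> 2 * e}) > 1 - e"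
    using limit_of_indexed_covers[OF \<open>e > 0\<close>] by blast
  define D where "D j = {y \<in> X. \<forall>n\<ge>1. dhat T n (z j) y \<le> 2 * e}" for j
  have "\<exists>\<delta>>0. \<forall>y\<in>D i. \<forall>y'\<in>D j. dist y y' < \<delta> \<longrightarrow> (\<forall>n\<ge>1. dhat T n y y' \<le> 4 * (2 * e))" for i j
    by (rule dhat_bound_across_balls[of _ _ "z i" _ "z j"]) (auto simp: D_def)
  then have "\<exists>\<delta>>0. \<forall>y\<in>(\<Union>j<C. D j). \<forall>y'\<in>(\<Union>j<C. D j). dist y y' < \<delta> \<longrightarrow> (\<forall>n\<ge>1. dhat T n y y' \<le> 8 * e)"
    using uniform_on_finite_Union[OF finite_lessThan, where D = D] by simp
  moreover have "8 * e \<le> \<epsilon>" "e \<le> \<eta>"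
    by (simp_all add: e_def)
  ultimately have "equicont_in_mean_upto T \<epsilon> (\<Union>j<C. D j)"
    unfolding equicont_in_mean_upto_def by (meson order_trans)
  moreover have "prob (\<Union>j<C. D j) \<ge> 1 - e"
    unfolding D_def using z(2) by (rule prob_dhat_balls_all_times)
  moreover have "(\<Union>j<C. D j) \<in> sets \<mu>"
    unfolding D_def by (intro sets.finite_UN finite_lessThan sets_dhat_le_all)
  ultimately show "\<exists>K\<in>sets \<mu>. prob K \<ge> 1 - \<eta> \<and> equicont_in_mean_upto T \<epsilon> K"
    using \<open>e \<le> \<eta>\<close> by (intro bexI[of _ "\<Union>j<C. D j"]) auto
qed

end

theorem mainTheorem8:
  fixes X :: "'a::metric_space set" and T :: "'a \<Rightarrow> 'a" and \<mu> :: "'a measure"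
  assumes "tds X T"
    and "prob_space \<mu>"
    and "sets \<mu> = sets (restrict_space borel X)"
    and "space \<mu> = X"
    and "invariant_measure \<mu> T"
  shows "(bounded_complexity \<mu> X T \<longleftrightarrow> mu_equicont_in_mean \<mu> T)
       \<and> (mu_equicont_in_mean \<mu> T \<longleftrightarrow> mu_mean_equicont \<mu> T)"
proof -
  interpret measured_tds X T \<mu>
    using assms(1-4) by (rule measured_tds.intro)
  show ?thesis
    using bounded_complexity_imp_mu_equicont_in_mean mu_equicont_in_mean_imp_bounded_complexity
      mu_equicont_in_mean_imp_mu_mean_equicont mu_mean_equicont_imp_mu_equicont_in_mean
    by blast
qed

end
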